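(* Let $\varphi:\mathbb{R}\to\mathbb{R}$ be smooth and let $\Sigma$ be a properly immersed $[\varphi,\vec e_3]$-minimal surface in $\mathbb{R}^3$ such that $|\dot\varphi(\mu(p))|\le B\sqrt{\mathcal{G}(|p|)}$ outside a compact subset of $\Sigma$, where $B>0$ and $\mathcal{G}:[0,+\infty)\to\mathbb{R}$ is smooth with $\mathcal{G}(0)>0$, $\mathcal{G}'\ge0$, $\mathcal{G}^{-1/2}\notin L^1([0,+\infty))$ and $\limsup_{t\to+\infty}t\mathcal{G}(\sqrt t)/\mathcal{G}(t)<+\infty$. Suppose $\Sigma\subset\mathcal{H}_{\vec v}=\{x:\langle x,\vec v\rangle\le0\}$ for some nonzero $\vec v$ with $\langle\vec v,\vec e_3\rangle=0$. Then either $\Sigma$ is a plane parallel to $\partial\mathcal{H}_{\vec v}$, or $\Sigma$ is not such a plane and there is a divergent sequence $p_n\in\Sigma$ with $\eta(p_n)\to0$.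
   Context: Surfaces are connected, orientable, immersed in $\mathbb{R}^3$, without boundary, with unit normal $N$; $\mu(p)=\langle p,\vec e_3\rangle$, $\eta=\langle N,\vec e_3\rangle$. $\Sigma$ is $[\varphi,\vec e_3]$-minimal if its mean curvature vector $\vec H$ (trace of the second fundamental form) satisfies $\vec H=\dot\varphi(\mu)\eta N$. A sequence is divergent if it eventually leaves every compact subset of $\Sigma$. *)

theory Defs
  imports "HOL-Analysis.Analysis"
begin

fun Ck :: "nat \<Rightarrow> ('a::euclidean_space \<Rightarrow> 'b::real_normed_vector) \<Rightarrow> 'a set \<Rightarrow> bool" where
  "Ck 0 F V = continuous_on V F"
| "Ck (Suc k) F V = (F differentiable_on V \<and>
      (\<forall>b\<in>Basis. Ck k (\<lambda>x. frechet_derivative F (at x) b) V))"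

definition smooth_on :: "('a::euclidean_space \<Rightarrow> 'b::real_normed_vector) \<Rightarrow> 'a set \<Rightarrow> bool" where
  "smooth_on F V \<longleftrightarrow> (\<forall>k. Ck k F V)"

definition e3 :: "real^3" where "e3 = axis 3 1"

definition pd :: "2 \<Rightarrow> (real^2 \<Rightarrow> real^3) \<Rightarrow> real^2 \<Rightarrow> real^3" where
  "pd i F x = frechet_derivative F (at x) (axis i 1)"

definition pd2 :: "2 \<Rightarrow> 2 \<Rightarrow> (real^2 \<Rightarrow> real^3) \<Rightarrow> real^2 \<Rightarrow> real^3" where
  "pd2 i j F x = pd i (pd j F) x"

definition fff_E :: "(real^2 \<Rightarrow> real^3) \<Rightarrow> real^2 \<Rightarrow> real" where
  "fff_E F x = pd 1 F x \<bullet> pd 1 F x"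
definition fff_F :: "(real^2 \<Rightarrow> real^3) \<Rightarrow> real^2 \<Rightarrow> real" where
  "fff_F F x = pd 1 F x \<bullet> pd 2 F x"
definition fff_G :: "(real^2 \<Rightarrow> real^3) \<Rightarrow> real^2 \<Rightarrow> real" where
  "fff_G F x = pd 2 F x \<bullet> pd 2 F x"

definition smooth_immersion :: "(real^2 \<Rightarrow> real^3) \<Rightarrow> (real^2) set \<Rightarrow> bool" where
  "smooth_immersion F V \<longleftrightarrow> open V \<and> smooth_on F V \<and>
     (\<forall>x\<in>V. fff_E F x * fff_G F x - (fff_F F x)\<^sup>2 > 0)"

text \<open>Scalar mean curvature w.r.t. the unit normal n (trace of the second fundamental
 form, no factor 1/2), i.e. the N-component of the mean curvature vector
 g^{ij} (F_ij)^perp.\<close>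
definition mean_curv :: "(real^2 \<Rightarrow> real^3) \<Rightarrow> real^3 \<Rightarrow> real^2 \<Rightarrow> real" where
  "mean_curv F n x =
     (fff_G F x * (pd2 1 1 F x \<bullet> n) - 2 * fff_F F x * (pd2 1 2 F x \<bullet> n)
        + fff_E F x * (pd2 2 2 F x \<bullet> n))
     / (fff_E F x * fff_G F x - (fff_F F x)\<^sup>2)"

text \<open>An abstract surface X (nonempty, connected, Hausdorff, without boundary) with an immersion
 f : X \<rightarrow> R^3: every point has an open neighbourhood U and a homeomorphism psi from an
 open set V of R^2 onto U such that f \<circ> psi is a smooth immersion (this induces the smooth
 structure). N is a continuous unit normal field (orientability).\<close>
definition local_param :: "'a topology \<Rightarrow> ('a \<Rightarrow> real^3) \<Rightarrow> (real^2) set \<Rightarrow> (real^2 \<Rightarrow> 'a) \<Rightarrow> bool" where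
  "local_param X f V \<psi> \<longleftrightarrow> open V \<and> openin X (\<psi> ` V) \<and>
     homeomorphic_map (top_of_set V) (subtopology X (\<psi> ` V)) \<psi> \<and>
     smooth_immersion (f \<circ> \<psi>) V"

definition immersed_surface :: "'a topology \<Rightarrow> ('a \<Rightarrow> real^3) \<Rightarrow> ('a \<Rightarrow> real^3) \<Rightarrow> bool" where
  "immersed_surface X f N \<longleftrightarrow>
     topspace X \<noteq> {} \<and> connected_space X \<and> Hausdorff_space X \<and>
     continuous_map X euclidean f \<and> continuous_map X euclidean N \<and>
     (\<forall>p\<in>topspace X. \<exists>V \<psi>. local_param X f V \<psi> \<and> p \<in> \<psi> ` V) \<and>
     (\<forall>p\<in>topspace X. norm (N p) = 1) \<and>
     (\<forall>V \<psi>. local_param X f V \<psi> \<longrightarrow>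
        (\<forall>x\<in>V. N (\<psi> x) \<bullet> pd 1 (f \<circ> \<psi>) x = 0 \<and> N (\<psi> x) \<bullet> pd 2 (f \<circ> \<psi>) x = 0))"

definition proper_immersion :: "'a topology \<Rightarrow> ('a \<Rightarrow> real^3) \<Rightarrow> bool" where
  "proper_immersion X f \<longleftrightarrow> (\<forall>K. compact K \<longrightarrow> compactin X {p \<in> topspace X. f p \<in> K})"

text \<open>[phi, e3]-minimal: mean curvature vector equals phi'(mu) eta N, i.e. its N-component
 equals phi'(mu) eta (it is normal anyway).\<close>
definition phi_minimal :: "(real \<Rightarrow> real) \<Rightarrow> 'a topology \<Rightarrow> ('a \<Rightarrow> real^3) \<Rightarrow> ('a \<Rightarrow> real^3) \<Rightarrow> bool" where
  "phi_minimal \<phi> X f N \<longleftrightarrow>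
     (\<forall>V \<psi>. local_param X f V \<psi> \<longrightarrow>
        (\<forall>x\<in>V. mean_curv (f \<circ> \<psi>) (N (\<psi> x)) x
                = deriv \<phi> (f (\<psi> x) \<bullet> e3) * (N (\<psi> x) \<bullet> e3)))"

definition divergent_seq :: "'a topology \<Rightarrow> (nat \<Rightarrow> 'a) \<Rightarrow> bool" where
  "divergent_seq X p \<longleftrightarrow> (\<forall>K. compactin X K \<longrightarrow> (\<forall>\<^sub>F n in sequentially. p n \<notin> K))"

end

(*
  Suppose |eta| >= eps on the part of Sigma outside some ball B_R. At a point outside B_R
  where the restriction of a function W to Sigma is maximal, grad W is normal to Sigma, so
  eps times its horizontal part is at most |grad W . e3|. Subtracting the height penalty
  delta * sqrt (1 + (x3 - z)^2), whose gradient is vertical and of length at most delta,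
  makes superlevel sets compact (Sigma is proper) without spoiling this estimate. With
  W = -|x' - c|^2 this shows that the closure of the horizontal projection of Sigma is open
  and closed among horizontal points outside a disc, so by connectedness and the halfspace
  condition the projection is bounded; with W = x1 the height of Sigma is then bounded too.
  But Sigma cannot be bounded: at a maximum of |x'|^2 the horizontal position vector is
  normal, hence lambda eta = 0 for its normal component lambda, so the mean curvature term
  lambda phi'(mu) eta drops out of the trace of the second-order condition, which becomes
  2 (2 - |grad x3|^2) > 0.
  Hence eta comes arbitrarily close to 0 arbitrarily far out, which gives the divergent
  sequence whichever alternative holds.
*)
theory Submission
  imports Defs "HOL-Analysis.Cross3"
begin

section \<open>Calculus\<close>

lemma has_vector_derivative_along_line:
  fixes G :: "'a::real_normed_vector \<Rightarrow> 'b::real_normed_vector"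
  assumes "(G has_derivative D) (at (x + t *\<^sub>R u))"
  shows "((\<lambda>s. G (x + s *\<^sub>R u)) has_vector_derivative D u) (at t)"
proof -
  have "((\<lambda>s. x + s *\<^sub>R u) has_derivative (\<lambda>s. s *\<^sub>R u)) (at t)"
    by (auto intro!: derivative_eq_intros)
  from has_derivative_compose[OF this assms]
  show ?thesis
    using linear_cmul[OF has_derivative_linear[OF assms]] by (simp add: has_vector_derivative_def)
qed

lemma second_difference_mean_value:
  fixes F :: "'a::real_normed_vector \<Rightarrow> 'b::real_inner"
  assumes h: "0 < h" and F': "\<And>y. y \<in> S \<Longrightarrow> (F has_derivative F' y) (at y)"
    and S: "\<And>s. 0 \<le> s \<Longrightarrow> s \<le> h \<Longrightarrow> x + s *\<^sub>R a \<in> S \<and> x + s *\<^sub>R a + h *\<^sub>R b \<in> S"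
  obtains \<sigma> where "0 < \<sigma>" "\<sigma> < h"
    "norm (F (x + h *\<^sub>R a + h *\<^sub>R b) - F (x + h *\<^sub>R a) - F (x + h *\<^sub>R b) + F x - h\<^sup>2 *\<^sub>R v)
      \<le> h * norm (F' (x + \<sigma> *\<^sub>R a + h *\<^sub>R b) a - F' (x + \<sigma> *\<^sub>R a) a - h *\<^sub>R v)"
proof -
  define \<psi> where "\<psi> s = F ((x + h *\<^sub>R b) + s *\<^sub>R a) - F (x + s *\<^sub>R a) - (s * h) *\<^sub>R v" for s
  define \<psi>' where "\<psi>' s = F' (x + s *\<^sub>R a + h *\<^sub>R b) a - F' (x + s *\<^sub>R a) a - h *\<^sub>R v" for s
  have der: "(\<psi> has_derivative (\<lambda>t. t *\<^sub>R \<psi>' s)) (at s)" if "0 \<le> s" "s \<le> h" for s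
  proof -
    have eq: "(x + h *\<^sub>R b) + s *\<^sub>R a = x + s *\<^sub>R a + h *\<^sub>R b"
      by (simp add: algebra_simps)
    have "(F has_derivative F' (x + s *\<^sub>R a + h *\<^sub>R b)) (at ((x + h *\<^sub>R b) + s *\<^sub>R a))"
      "(F has_derivative F' (x + s *\<^sub>R a)) (at (x + s *\<^sub>R a))"
      using F' S[OF that] unfolding eq by auto
    from this[THEN has_vector_derivative_along_line]
    have "((\<lambda>s. F ((x + h *\<^sub>R b) + s *\<^sub>R a)) has_vector_derivative F' (x + s *\<^sub>R a + h *\<^sub>R b) a) (at s)"
        "((\<lambda>s. F (x + s *\<^sub>R a)) has_vector_derivative F' (x + s *\<^sub>R a) a) (at s)" .
    then show ?thesis
      unfolding \<psi>_def \<psi>'_def has_vector_derivative_def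
      by (auto intro!: derivative_eq_intros simp: algebra_simps)
  qed
  then have "continuous_on {0..h} \<psi>"
    by (auto intro!: continuous_at_imp_continuous_on has_derivative_continuous)
  then obtain \<sigma> where \<sigma>: "0 < \<sigma>" "\<sigma> < h" and "norm (\<psi> h - \<psi> 0) \<le> norm ((h - 0) *\<^sub>R \<psi>' \<sigma>)"
    using mvt_general[OF h, of \<psi> "\<lambda>s t. t *\<^sub>R \<psi>' s"] der by fastforce
  moreover have "\<psi> h - \<psi> 0 = F (x + h *\<^sub>R a + h *\<^sub>R b) - F (x + h *\<^sub>R a) - F (x + h *\<^sub>R b) + F x - h\<^sup>2 *\<^sub>R v"
    unfolding \<psi>_def by (simp add: algebra_simps power2_eq_square)
  ultimately show ?thesis
    using that h unfolding \<psi>'_def by simp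
qed

lemma norm_scaleR_add_le:
  assumes "0 \<le> s" "s \<le> h" "0 \<le> t" "t \<le> h"
  shows "norm (s *\<^sub>R a + t *\<^sub>R b) \<le> h * (norm a + norm b)"
proof -
  have "norm (s *\<^sub>R a + t *\<^sub>R b) \<le> s * norm a + t * norm b"
    using norm_triangle_ineq[of "s *\<^sub>R a" "t *\<^sub>R b"] assms by simp
  also have "\<dots> \<le> h * norm a + h * norm b"
    using assms by (intro add_mono mult_right_mono) auto
  finally show ?thesis
    by (simp add: algebra_simps)
qed

lemma second_difference_bound:
  fixes F :: "'a::real_normed_vector \<Rightarrow> 'b::real_inner"
  assumes h: "0 < h" "h * (norm a + norm b) < \<rho>"
    and F': "\<And>y. y \<in> ball x \<rho> \<Longrightarrow> (F has_derivative F' y) (at y)"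
    and lin: "\<And>y. y \<in> ball x \<rho> \<Longrightarrow> norm (F' y a - F' x a - Da (y - x)) \<le> c * norm (y - x)"
    and Da: "linear Da" and c: "0 \<le> c"
  shows "norm (F (x + h *\<^sub>R a + h *\<^sub>R b) - F (x + h *\<^sub>R a) - F (x + h *\<^sub>R b) + F x - h\<^sup>2 *\<^sub>R Da b)
    \<le> 2 * c * (norm a + norm b) * h\<^sup>2"
proof -
  define P where "P y = F' y a - F' x a - Da (y - x)" for y
  have P: "norm (P (x + s *\<^sub>R a + t *\<^sub>R b)) \<le> c * (h * (norm a + norm b))"
    and in_ball: "x + s *\<^sub>R a + t *\<^sub>R b \<in> ball x \<rho>"
    if "0 \<le> s" "s \<le> h" "0 \<le> t" "t \<le> h" for s t
  proof -
    have "dist x (x + (s *\<^sub>R a + t *\<^sub>R b)) = norm (s *\<^sub>R a + t *\<^sub>R b)"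
      by (metis add_diff_cancel_left' dist_commute dist_norm)
    then show in_ball: "x + s *\<^sub>R a + t *\<^sub>R b \<in> ball x \<rho>"
      using norm_scaleR_add_le[OF that, of a b] h(2) by (simp add: add.assoc)
    show "norm (P (x + s *\<^sub>R a + t *\<^sub>R b)) \<le> c * (h * (norm a + norm b))"
      unfolding P_def using lin[OF in_ball] norm_scaleR_add_le[OF that, of a b] c
      by (simp add: add.assoc order_trans[OF _ mult_left_mono])
  qed
  have S: "x + s *\<^sub>R a \<in> ball x \<rho> \<and> x + s *\<^sub>R a + h *\<^sub>R b \<in> ball x \<rho>" if "0 \<le> s" "s \<le> h" for s
    using in_ball[of s 0] in_ball[of s h] that h(1) by simp
  obtain \<sigma> where \<sigma>: "0 < \<sigma>" "\<sigma> < h" and mvt: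
    "norm (F (x + h *\<^sub>R a + h *\<^sub>R b) - F (x + h *\<^sub>R a) - F (x + h *\<^sub>R b) + F x - h\<^sup>2 *\<^sub>R Da b)
      \<le> h * norm (F' (x + \<sigma> *\<^sub>R a + h *\<^sub>R b) a - F' (x + \<sigma> *\<^sub>R a) a - h *\<^sub>R Da b)"
    by (rule second_difference_mean_value[OF h(1) F' S])
  have "F' (x + \<sigma> *\<^sub>R a + h *\<^sub>R b) a - F' (x + \<sigma> *\<^sub>R a) a - h *\<^sub>R Da b
      = P (x + \<sigma> *\<^sub>R a + h *\<^sub>R b) - P (x + \<sigma> *\<^sub>R a + 0 *\<^sub>R b)"
    using Da unfolding P_def by (simp add: linear_add linear_cmul)
  also have "norm \<dots> \<le> 2 * (c * (h * (norm a + norm b)))"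
    using P[of \<sigma> h] P[of \<sigma> 0] \<sigma> h(1) norm_triangle_ineq4 by (smt (verit))
  finally have "h * norm (F' (x + \<sigma> *\<^sub>R a + h *\<^sub>R b) a - F' (x + \<sigma> *\<^sub>R a) a - h *\<^sub>R Da b)
      \<le> h * (2 * (c * (h * (norm a + norm b))))"
    using h(1) by (intro mult_left_mono) auto
  then show ?thesis
    using mvt by (simp add: power2_eq_square mult_ac)
qed

lemma second_difference_estimate:
  fixes F :: "'a::real_normed_vector \<Rightarrow> 'b::real_inner"
  assumes r: "r > 0" and F': "\<And>y. y \<in> ball x r \<Longrightarrow> (F has_derivative F' y) (at y)"
    and Da: "((\<lambda>y. F' y a) has_derivative Da) (at x)" and e: "e > 0"
  shows "\<forall>\<^sub>F h in at_right 0.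
    norm (F (x + h *\<^sub>R a + h *\<^sub>R b) - F (x + h *\<^sub>R a) - F (x + h *\<^sub>R b) + F x - h\<^sup>2 *\<^sub>R Da b)
      \<le> e * h\<^sup>2"
proof -
  define C where "C = norm a + norm b + 1"
  have C: "C > 0"
    unfolding C_def by (simp add: add_nonneg_pos)
  have "e / (2 * C) > 0"
    using e C by simp
  then obtain d where d: "d > 0" and lin: "\<And>y. norm (y - x) < d \<Longrightarrow>
      norm (F' y a - F' x a - Da (y - x)) \<le> e / (2 * C) * norm (y - x)"
    using Da unfolding has_derivative_at_alt by blast
  have "norm (F (x + h *\<^sub>R a + h *\<^sub>R b) - F (x + h *\<^sub>R a) - F (x + h *\<^sub>R b) + F x - h\<^sup>2 *\<^sub>R Da b)
      \<le> e * h\<^sup>2" if h: "0 < h" "h < min d r / C" for h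
  proof -
    have "h * (norm a + norm b) < min d r"
      using h C unfolding C_def by (simp add: pos_less_divide_eq algebra_simps)
    moreover have "(F has_derivative F' y) (at y)" if "y \<in> ball x (min d r)" for y
      using F' that by simp
    moreover have "norm (F' y a - F' x a - Da (y - x)) \<le> e / (2 * C) * norm (y - x)"
      if "y \<in> ball x (min d r)" for y
    proof -
      have "norm (y - x) < d"
        using that by (simp add: dist_norm norm_minus_commute)
      then show ?thesis
        by (rule lin)
    qed
    moreover have "0 \<le> e / (2 * C)"
      using e C by simp
    ultimately have "norm (F (x + h *\<^sub>R a + h *\<^sub>R b) - F (x + h *\<^sub>R a) - F (x + h *\<^sub>R b) + F x - h\<^sup>2 *\<^sub>R Da b)
        \<le> 2 * (e / (2 * C)) * (norm a + norm b) * h\<^sup>2"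
      using second_difference_bound[OF h(1)] has_derivative_linear[OF Da] by blast
    also have "\<dots> \<le> e * h\<^sup>2"
      using e C unfolding C_def by (simp add: field_simps)
    finally show ?thesis .
  qed
  moreover have "min d r / C > 0"
    using d r C by simp
  ultimately show ?thesis
    unfolding eventually_at_right_field by blast
qed

lemma has_derivative_second_symmetric:
  fixes F :: "'a::real_normed_vector \<Rightarrow> 'b::real_inner"
  assumes r: "r > 0" and F': "\<And>y. y \<in> ball x r \<Longrightarrow> (F has_derivative F' y) (at y)"
    and Da: "((\<lambda>y. F' y a) has_derivative Da) (at x)"
    and Db: "((\<lambda>y. F' y b) has_derivative Db) (at x)"
  shows "Da b = Db a"
proof -
  define \<Delta> where "\<Delta> h = F (x + h *\<^sub>R a + h *\<^sub>R b) - F (x + h *\<^sub>R a) - F (x + h *\<^sub>R b) + F x" for h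
  have \<Delta>_swap: "F (x + h *\<^sub>R b + h *\<^sub>R a) - F (x + h *\<^sub>R b) - F (x + h *\<^sub>R a) + F x = \<Delta> h" for h
    unfolding \<Delta>_def by (simp add: algebra_simps)
  have "norm (Da b - Db a) \<le> 0 + e" if e: "e > 0" for e
  proof -
    have e2: "e / 2 > 0" using e by simp
    have "\<forall>\<^sub>F h in at_right 0. norm (\<Delta> h - h\<^sup>2 *\<^sub>R Da b) \<le> e / 2 * h\<^sup>2"
      using second_difference_estimate[OF r F' Da e2] unfolding \<Delta>_def .
    moreover have "\<forall>\<^sub>F h in at_right 0. norm (\<Delta> h - h\<^sup>2 *\<^sub>R Db a) \<le> e / 2 * h\<^sup>2"
      using second_difference_estimate[OF r F' Db e2, of a] unfolding \<Delta>_swap .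
    ultimately have "\<forall>\<^sub>F h in at_right 0. 0 < h \<and> norm (\<Delta> h - h\<^sup>2 *\<^sub>R Da b) \<le> e / 2 * h\<^sup>2
        \<and> norm (\<Delta> h - h\<^sup>2 *\<^sub>R Db a) \<le> e / 2 * h\<^sup>2"
      by (intro eventually_conj eventually_at_right_less)
    then obtain h where h: "0 < h" "norm (\<Delta> h - h\<^sup>2 *\<^sub>R Da b) \<le> e / 2 * h\<^sup>2"
        "norm (\<Delta> h - h\<^sup>2 *\<^sub>R Db a) \<le> e / 2 * h\<^sup>2"
      using eventually_happens' trivial_limit_at_right_real by blast
    have "h\<^sup>2 * norm (Da b - Db a) = norm ((\<Delta> h - h\<^sup>2 *\<^sub>R Db a) - (\<Delta> h - h\<^sup>2 *\<^sub>R Da b))"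
      by (simp add: algebra_simps flip: scaleR_diff_right)
    also have "\<dots> \<le> e * h\<^sup>2"
      using norm_triangle_ineq4[of "\<Delta> h - h\<^sup>2 *\<^sub>R Db a" "\<Delta> h - h\<^sup>2 *\<^sub>R Da b"] h by simp
    finally show ?thesis
      using h(1) by (simp add: mult.commute)
  qed
  then have "norm (Da b - Db a) \<le> 0"
    by (rule field_le_epsilon)
  then show ?thesis by simp
qed

lemma local_max_second_derivative_nonpos:
  fixes k k' :: "real \<Rightarrow> real"
  assumes r: "r > 0" and k': "\<And>t. \<bar>t\<bar> < r \<Longrightarrow> (k has_real_derivative k' t) (at t)"
    and k'': "(k' has_real_derivative k'') (at 0)"
    and max: "\<And>t. \<bar>t\<bar> < r \<Longrightarrow> k t \<le> k 0"
  shows "k'' \<le> 0"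
proof (rule ccontr)
  assume "\<not> k'' \<le> 0"
  have "k' 0 = 0"
    using DERIV_local_max[OF k' r] max r by auto
  then obtain d where d: "d > 0" "\<And>h. 0 < h \<Longrightarrow> h < d \<Longrightarrow> 0 < k' h"
    using DERIV_pos_inc_right[OF k''] \<open>\<not> k'' \<le> 0\<close> by force
  define t where "t = min d r / 2"
  have t: "0 < t" "t < d" "t < r"
    using d r unfolding t_def by auto
  then obtain s where s: "0 < s" "s < t" "k t - k 0 = (t - 0) * k' s"
    using MVT2[OF t(1), of k k'] k' by force
  have "0 < (t - 0) * k' s"
    using s t d(2)[of s] by simp
  then have "k t > k 0"
    using s(3) by linarith
  then show False
    using max[of t] t by auto
qed

lemma norm_local_max_second_order:
  fixes c :: "real \<Rightarrow> 'a::real_inner"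
  assumes r: "r > 0" and c': "\<And>t. \<bar>t\<bar> < r \<Longrightarrow> (c has_vector_derivative c' t) (at t)"
    and c'': "(c' has_vector_derivative c'') (at 0)"
    and max: "\<And>t. \<bar>t\<bar> < r \<Longrightarrow> norm (c t) \<le> norm (c 0)"
  shows "c 0 \<bullet> c'' + c' 0 \<bullet> c' 0 \<le> 0"
proof -
  have k': "((\<lambda>t. c t \<bullet> c t) has_real_derivative 2 * (c t \<bullet> c' t)) (at t)" if "\<bar>t\<bar> < r" for t
    using c'[OF that] unfolding has_vector_derivative_def has_field_derivative_def
    by (auto intro!: derivative_eq_intros simp: algebra_simps inner_commute)
  have "isCont c 0"
    using c' r by (metis abs_zero has_vector_derivative_continuous)
  then have k'': "((\<lambda>t. 2 * (c t \<bullet> c' t)) has_real_derivative 2 * (c 0 \<bullet> c'' + c' 0 \<bullet> c' 0)) (at 0)"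
    using c'' c'[of 0] r unfolding has_vector_derivative_def has_field_derivative_def
    by (auto intro!: derivative_eq_intros simp: algebra_simps inner_commute)
  have "\<And>t. \<bar>t\<bar> < r \<Longrightarrow> c t \<bullet> c t \<le> c 0 \<bullet> c 0"
    using max by (simp add: power2_norm_eq_inner[symmetric] norm_ge_zero power_mono)
  from local_max_second_derivative_nonpos[OF r k' k'' this]
  show ?thesis by simp
qed

section \<open>Horizontal projection and the height penalty\<close>

lemma e3_unit [simp]: "e3 \<bullet> e3 = 1" "norm e3 = 1"
  unfolding e3_def by (simp_all add: inner_axis_axis)

definition horiz :: "real^3 \<Rightarrow> real^3" where
  "horiz x = x - (x \<bullet> e3) *\<^sub>R e3"

lemma horiz_inner_e3 [simp]: "horiz x \<bullet> e3 = 0"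
  by (simp add: horiz_def inner_diff_left)

lemma inner_horiz_horizontal: "c \<bullet> e3 = 0 \<Longrightarrow> horiz x \<bullet> c = x \<bullet> c"
  by (simp add: horiz_def inner_diff_left inner_diff_right inner_commute)

lemma bounded_linear_horiz: "bounded_linear horiz"
  unfolding horiz_def by (intro bounded_linear_intros)

lemma continuous_on_horiz [continuous_intros]:
  "continuous_on S g \<Longrightarrow> continuous_on S (\<lambda>x. horiz (g x))"
  unfolding horiz_def by (intro continuous_intros)

lemma norm_horiz_squared: "(norm (horiz x))\<^sup>2 = (norm x)\<^sup>2 - (x \<bullet> e3)\<^sup>2"
  by (simp only: power2_norm_eq_inner)
    (simp add: horiz_def inner_diff_left inner_diff_right inner_commute power2_eq_square)

lemma norm_horiz_le: "norm (horiz x) \<le> norm x"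
  by (rule power2_le_imp_le) (simp_all add: norm_horiz_squared)

lemma norm_le_horiz_plus_height: "norm x \<le> norm (horiz x) + \<bar>x \<bullet> e3\<bar>"
proof -
  have "norm x = norm (horiz x + (x \<bullet> e3) *\<^sub>R e3)"
    by (simp add: horiz_def)
  also have "\<dots> \<le> norm (horiz x) + \<bar>x \<bullet> e3\<bar>"
    using norm_triangle_ineq[of "horiz x" "(x \<bullet> e3) *\<^sub>R e3"] by simp
  finally show ?thesis .
qed

lemma horiz_dist_squared_has_derivative:
  assumes "c \<bullet> e3 = 0"
  shows "((\<lambda>x. (horiz x - c) \<bullet> (horiz x - c)) has_derivative (\<lambda>h. (2 *\<^sub>R (horiz x - c)) \<bullet> h)) (at x)"
proof -
  have "((\<lambda>x. horiz x - c) has_derivative horiz) (at x)"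
    using has_derivative_diff[OF bounded_linear.has_derivative[OF bounded_linear_horiz has_derivative_ident]
        has_derivative_const] by simp
  from has_derivative_inner[OF this this]
  have "((\<lambda>x. (horiz x - c) \<bullet> (horiz x - c)) has_derivative
      (\<lambda>h. (horiz x - c) \<bullet> horiz h + horiz h \<bullet> (horiz x - c))) (at x)" .
  moreover have "(horiz x - c) \<bullet> e3 = 0"
    using assms by (simp add: inner_diff_left)
  then have "(\<lambda>h. (horiz x - c) \<bullet> horiz h + horiz h \<bullet> (horiz x - c)) = (\<lambda>h. (2 *\<^sub>R (horiz x - c)) \<bullet> h)"
    using inner_horiz_horizontal by (simp add: fun_eq_iff inner_commute[of "horiz x - c"])
  ultimately show ?thesis by simp
qed

lemma height_penalty_has_derivative:
  "\<exists>s. \<bar>s\<bar> \<le> 1 \<and> ((\<lambda>x. sqrt (1 + (x \<bullet> e3 - z)\<^sup>2)) has_derivative (\<lambda>h. s * (h \<bullet> e3))) (at x)"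
proof -
  define t where "t = x \<bullet> e3 - z"
  have pos: "0 < sqrt (1 + t\<^sup>2)" by (simp add: add_pos_nonneg)
  have "\<bar>t\<bar> \<le> sqrt (1 + t\<^sup>2)" by (simp add: real_le_rsqrt)
  then have "\<bar>t / sqrt (1 + t\<^sup>2)\<bar> \<le> 1" using pos by (simp add: abs_div)
  moreover have "((\<lambda>x. sqrt (1 + (x \<bullet> e3 - z)\<^sup>2)) has_derivative
      (\<lambda>h. inverse (sqrt (1 + t\<^sup>2)) / 2 * (2 * t * (h \<bullet> e3)))) (at x)"
    using pos unfolding t_def
    by (auto intro!: derivative_eq_intros simp: power2_eq_square algebra_simps)
  moreover have "(\<lambda>h. inverse (sqrt (1 + t\<^sup>2)) / 2 * (2 * t * (h \<bullet> e3)))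
      = (\<lambda>h. t / sqrt (1 + t\<^sup>2) * (h \<bullet> e3))"
    by (simp add: fun_eq_iff field_simps)
  ultimately show ?thesis by (metis (no_types))
qed

lemma sqrt_one_plus_square_ge: "1 \<le> sqrt (1 + t\<^sup>2)" "\<bar>t\<bar> \<le> sqrt (1 + t\<^sup>2)"
  by (auto intro: real_le_rsqrt)

lemma bounded_penalized_superlevel:
  assumes \<delta>: "\<delta> > 0" and horiz_bound: "\<And>x. x \<in> S \<Longrightarrow> norm (horiz x) \<le> K"
    and penalty_bound: "\<And>x. x \<in> S \<Longrightarrow> \<delta> * sqrt (1 + (x \<bullet> e3 - z)\<^sup>2) \<le> M"
  shows "bounded S"
  unfolding bounded_iff
proof (intro exI ballI)
  fix x assume x: "x \<in> S"
  have "\<delta> * \<bar>x \<bullet> e3 - z\<bar> \<le> M"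
    using penalty_bound[OF x] sqrt_one_plus_square_ge(2)[of "x \<bullet> e3 - z"] \<delta>
    by (meson mult_left_mono less_imp_le order_trans)
  then have "\<bar>x \<bullet> e3 - z\<bar> \<le> M / \<delta>"
    using \<delta> by (simp add: pos_le_divide_eq mult.commute[of _ \<delta>])
  then have "\<bar>x \<bullet> e3\<bar> \<le> \<bar>z\<bar> + M / \<delta>"
    by linarith
  then show "norm x \<le> K + (\<bar>z\<bar> + M / \<delta>)"
    using norm_le_horiz_plus_height[of x] horiz_bound[OF x] by linarith
qed

lemma orthogonal_tangents_imp_parallel_normal:
  fixes u A B N :: "real^3"
  assumes "u \<bullet> A = 0" "u \<bullet> B = 0" "N \<bullet> A = 0" "N \<bullet> B = 0" "norm N = 1"
    and "(A \<bullet> A) * (B \<bullet> B) - (A \<bullet> B)\<^sup>2 > 0"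
  shows "u = (u \<bullet> N) *\<^sub>R N"
proof -
  define c where "c = cross3 A B"
  have cc: "c \<bullet> c > 0"
    using norm_cross[of A B] assms(6) by (simp add: c_def power2_norm_eq_inner)
  have along_c: "x = ((c \<bullet> x) / (c \<bullet> c)) *\<^sub>R c" if "x \<bullet> A = 0" "x \<bullet> B = 0" for x
  proof -
    have "cross3 x c = 0"
      using Lagrange[of x A B] that by (simp add: c_def inner_commute)
    then have "(c \<bullet> c) *\<^sub>R x = (c \<bullet> x) *\<^sub>R c"
      using Lagrange[of c x c] by simp
    moreover have "x = (1 / (c \<bullet> c)) *\<^sub>R ((c \<bullet> c) *\<^sub>R x)"
      using cc by simp
    ultimately show ?thesis by simp
  qed
  define \<alpha> \<beta> where "\<alpha> = (c \<bullet> u) / (c \<bullet> c)" and "\<beta> = (c \<bullet> N) / (c \<bullet> c)"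
  have u: "u = \<alpha> *\<^sub>R c" and N: "N = \<beta> *\<^sub>R c"
    using along_c assms(1-4) unfolding \<alpha>_def \<beta>_def by blast+
  have "\<beta>\<^sup>2 * (c \<bullet> c) = 1"
    using assms(5) N by (metis inner_scaleR_left inner_scaleR_right mult.assoc norm_eq_1 power2_eq_square)
  then have "(u \<bullet> N) *\<^sub>R N = \<alpha> *\<^sub>R c"
    by (subst (1 2) N, subst u) (simp add: power2_eq_square algebra_simps)
  then show ?thesis using u by simp
qed

lemma horiz_bound_if_parallel_normal:
  assumes "g = (g \<bullet> n) *\<^sub>R n" "norm n = 1" "\<epsilon> \<le> \<bar>n \<bullet> e3\<bar>"
  shows "\<epsilon> * norm (horiz g) \<le> \<bar>g \<bullet> e3\<bar>"
proof (cases "\<epsilon> \<le> 0")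
  case True
  then have "\<epsilon> * norm (horiz g) \<le> 0"
    by (simp add: mult_nonpos_nonneg)
  then show ?thesis by linarith
next
  case False
  have "norm g = norm ((g \<bullet> n) *\<^sub>R n)"
    by (rule arg_cong[OF assms(1)])
  then have "norm (horiz g) \<le> \<bar>g \<bullet> n\<bar>"
    using norm_horiz_le[of g] assms(2) by simp
  then have "\<epsilon> * norm (horiz g) \<le> \<bar>n \<bullet> e3\<bar> * \<bar>g \<bullet> n\<bar>"
    using False assms(3) by (intro mult_mono) auto
  also have "\<dots> = \<bar>g \<bullet> e3\<bar>"
    by (subst (2) assms(1)) (simp add: abs_mult)
  finally show ?thesis .
qed

section \<open>Maxima of functions on immersed surfaces\<close>

lemma smooth_on_imp_differentiable_on: "smooth_on F V \<Longrightarrow> F differentiable_on V"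
  unfolding smooth_on_def by (metis Ck.simps(2))

lemma smooth_on_imp_pd_differentiable_on:
  fixes F :: "real^2 \<Rightarrow> real^3"
  assumes "smooth_on F V"
  shows "pd i F differentiable_on V"
proof -
  have "Ck (Suc (Suc 0)) F V"
    using assms unfolding smooth_on_def by blast
  then have "Ck (Suc 0) (\<lambda>x. frechet_derivative F (at x) (axis i 1)) V"
    by (simp del: Ck.simps(1))
  then show ?thesis
    by (simp add: pd_def[abs_def])
qed

lemma local_param_facts:
  assumes "local_param X f V \<psi>"
  shows "open V" "\<psi> ` V \<subseteq> topspace X" "smooth_immersion (f \<circ> \<psi>) V"
  using assms unfolding local_param_def by (auto dest: openin_subset)

lemma unit_normal: "immersed_surface X f N \<Longrightarrow> p \<in> topspace X \<Longrightarrow> norm (N p) = 1"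
  unfolding immersed_surface_def by blast

lemma surface_continuous: "immersed_surface X f N \<Longrightarrow> continuous_map X euclidean f"
  unfolding immersed_surface_def by blast

lemma local_param_differentiable:
  assumes "local_param X f V \<psi>" "x \<in> V"
  shows "(f \<circ> \<psi>) differentiable_on V" "pd j (f \<circ> \<psi>) differentiable (at x)"
proof -
  have smooth: "smooth_on (f \<circ> \<psi>) V" and V: "open V"
    using local_param_facts[OF assms(1)] unfolding smooth_immersion_def by auto
  show "(f \<circ> \<psi>) differentiable_on V"
    by (rule smooth_on_imp_differentiable_on[OF smooth])
  show "pd j (f \<circ> \<psi>) differentiable (at x)"
    using smooth_on_imp_pd_differentiable_on[OF smooth, of j] assms(2)
    by (simp add: differentiable_on_eq_differentiable_at[OF V])
qed

lemma surface_local_param_at: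
  assumes "immersed_surface X f N" "p \<in> topspace X"
  obtains V \<psi> x where "local_param X f V \<psi>" "x \<in> V" "\<psi> x = p"
  using assms unfolding immersed_surface_def by (metis imageE)

lemma gradient_parallel_normal_at_max:
  assumes surf: "immersed_surface X f N" and p: "p \<in> topspace X"
    and W: "(W has_derivative (\<lambda>y. g \<bullet> y)) (at (f p))"
    and max: "\<And>q. q \<in> topspace X \<Longrightarrow> W (f q) \<le> W (f p)"
  shows "g = (g \<bullet> N p) *\<^sub>R N p"
proof -
  obtain V \<psi> x0 where lp: "local_param X f V \<psi>" and x0: "x0 \<in> V" "\<psi> x0 = p"
    using surface_local_param_at[OF surf p] .
  note V = local_param_facts[OF lp]
  define F where "F = f \<circ> \<psi>"
  have "F differentiable (at x0)"
    using local_param_differentiable(1)[OF lp x0(1)] V(1) x0(1) unfolding F_def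
    by (simp add: differentiable_on_eq_differentiable_at)
  then have F': "(F has_derivative frechet_derivative F (at x0)) (at x0)"
    using frechet_derivative_works by blast
  have "(W has_derivative (\<lambda>y. g \<bullet> y)) (at (F x0))"
    using W x0(2) by (simp add: F_def)
  from has_derivative_compose[OF F' this]
  have "((\<lambda>x. W (F x)) has_derivative (\<lambda>u. g \<bullet> frechet_derivative F (at x0) u)) (at x0)" .
  moreover have "\<forall>y\<in>V. W (F y) \<le> W (F x0)"
    using max V(2) x0 unfolding F_def by auto
  ultimately have "(\<lambda>u. g \<bullet> frechet_derivative F (at x0) u) = (\<lambda>u. 0)"
    using differential_zero_maxmin[OF x0(1) V(1)] by blast
  then have "g \<bullet> pd j F x0 = 0" for j
    by (simp add: pd_def fun_eq_iff)
  moreover have "N p \<bullet> pd 1 F x0 = 0" "N p \<bullet> pd 2 F x0 = 0"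
    using surf lp x0 unfolding immersed_surface_def F_def by blast+
  moreover have "(pd 1 F x0 \<bullet> pd 1 F x0) * (pd 2 F x0 \<bullet> pd 2 F x0) - (pd 1 F x0 \<bullet> pd 2 F x0)\<^sup>2 > 0"
    using V(3) x0(1) unfolding smooth_immersion_def fff_E_def fff_F_def fff_G_def F_def by blast
  ultimately show ?thesis
    using orthogonal_tangents_imp_parallel_normal unit_normal[OF surf p] by blast
qed

lemma proper_attains_max:
  fixes W :: "real^3 \<Rightarrow> real"
  assumes f: "continuous_map X euclidean f" and proper: "proper_immersion X f"
    and p1: "p1 \<in> topspace X" and W: "continuous_on UNIV W" and C: "closed C"
    and fC: "\<And>p. p \<in> topspace X \<Longrightarrow> f p \<in> C"
    and bounded: "bounded {x \<in> C. W (f p1) \<le> W x}"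
  obtains p where "p \<in> topspace X" "\<And>q. q \<in> topspace X \<Longrightarrow> W (f q) \<le> W (f p)"
proof -
  define S where "S = {x \<in> C. W (f p1) \<le> W x}"
  have "closed S"
    unfolding S_def using C W by (intro closed_Collect_conj closed_Collect_le) (auto intro: continuous_intros)
  then have "compact S"
    using bounded unfolding S_def by (simp add: compact_eq_bounded_closed)
  then have "compactin X {p \<in> topspace X. f p \<in> S}"
    using proper unfolding proper_immersion_def by blast
  then have "compact (f ` {p \<in> topspace X. f p \<in> S})"
    using image_compactin[OF _ f] by (metis compactin_euclidean_iff)
  moreover have "f p1 \<in> f ` {p \<in> topspace X. f p \<in> S}"
    using p1 fC unfolding S_def by auto
  ultimately obtain y where y: "y \<in> f ` {p \<in> topspace X. f p \<in> S}"
      "\<forall>z \<in> f ` {p \<in> topspace X. f p \<in> S}. W z \<le> W y"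
    using continuous_attains_sup[OF _ _ continuous_on_subset[OF W subset_UNIV]] by blast
  then obtain p where p: "p \<in> topspace X" "f p \<in> S"
    and max_S: "\<And>q. q \<in> topspace X \<Longrightarrow> f q \<in> S \<Longrightarrow> W (f q) \<le> W (f p)"
    by auto
  show thesis
  proof (rule that[OF p(1)])
    fix q assume q: "q \<in> topspace X"
    show "W (f q) \<le> W (f p)"
    proof (cases "f q \<in> S")
      case True then show ?thesis using max_S q by blast
    next
      case False
      then show ?thesis using q fC p1 max_S[OF p1] unfolding S_def by fastforce
    qed
  qed
qed

lemma proper_attains_penalized_max:
  fixes W0 :: "real^3 \<Rightarrow> real"
  assumes f: "continuous_map X euclidean f" and proper: "proper_immersion X f"
    and p1: "p1 \<in> topspace X" and \<delta>: "\<delta> > 0" and W0: "continuous_on UNIV W0"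
    and C: "closed C" and fC: "\<And>p. p \<in> topspace X \<Longrightarrow> f p \<in> C"
    and bounds: "\<And>x. x \<in> C \<Longrightarrow>
      W0 (f p1) - \<delta> * sqrt (1 + (f p1 \<bullet> e3 - z)\<^sup>2) \<le> W0 x - \<delta> * sqrt (1 + (x \<bullet> e3 - z)\<^sup>2) \<Longrightarrow>
      norm (horiz x) \<le> K \<and> W0 x \<le> M"
  obtains p where "p \<in> topspace X" "\<And>q. q \<in> topspace X \<Longrightarrow>
    W0 (f q) - \<delta> * sqrt (1 + (f q \<bullet> e3 - z)\<^sup>2) \<le> W0 (f p) - \<delta> * sqrt (1 + (f p \<bullet> e3 - z)\<^sup>2)"
proof -
  define W where "W x = W0 x - \<delta> * sqrt (1 + (x \<bullet> e3 - z)\<^sup>2)" for x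
  have "bounded {x \<in> C. W (f p1) \<le> W x}"
    by (rule bounded_penalized_superlevel[OF \<delta>, where K = K and M = "M - W (f p1)" and z = z])
      (use bounds in \<open>fastforce simp: W_def\<close>)+
  moreover have "continuous_on UNIV W"
    unfolding W_def by (intro continuous_intros W0)
  ultimately show ?thesis
    using proper_attains_max[OF f proper p1 _ C fC] that unfolding W_def by blast
qed

lemma open_contains_line_segment:
  fixes x u :: "'a::real_normed_vector"
  assumes "open V" "x \<in> V"
  obtains \<rho> where "\<rho> > 0" "\<And>t. \<bar>t\<bar> < \<rho> \<Longrightarrow> x + t *\<^sub>R u \<in> V"
proof -
  obtain r where r: "r > 0" "ball x r \<subseteq> V"
    using assms open_contains_ball by blast
  show thesis
  proof (rule that)
    show "r / (norm u + 1) > 0"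
      using r(1) by (simp add: add_nonneg_pos)
    fix t assume t: "\<bar>t\<bar> < r / (norm u + 1)"
    have "\<bar>t\<bar> * norm u \<le> \<bar>t\<bar> * (norm u + 1)"
      by (simp add: mult_left_mono)
    also have "\<dots> < r"
      using t r(1) by (simp add: pos_less_divide_eq add_nonneg_pos)
    finally show "x + t *\<^sub>R u \<in> V"
      using r(2) by (auto simp: dist_norm)
  qed
qed

lemma pd2_symmetric:
  fixes F :: "real^2 \<Rightarrow> real^3"
  assumes V: "open V" "x \<in> V" and dF: "F differentiable_on V"
    and dP: "\<And>j. pd j F differentiable (at x)"
  shows "pd2 2 1 F x = pd2 1 2 F x"
proof -
  obtain r where r: "r > 0" "ball x r \<subseteq> V"
    using V open_contains_ball by blast
  have F': "(F has_derivative frechet_derivative F (at y)) (at y)" if "y \<in> ball x r" for y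
    using dF V(1) r(2) that
    by (meson differentiable_on_eq_differentiable_at frechet_derivative_works subsetD)
  have "((\<lambda>y. frechet_derivative F (at y) (axis j 1)) has_derivative frechet_derivative (pd j F) (at x)) (at x)"
    for j
    using dP[of j] frechet_derivative_works unfolding pd_def[abs_def] by blast
  from has_derivative_second_symmetric[OF r(1) F' this this]
  show ?thesis
    unfolding pd2_def pd_def[of _ "pd _ F"] by simp
qed

lemma has_vector_derivative_along_direction:
  fixes G :: "real^2 \<Rightarrow> real^3"
  assumes "G differentiable (at (x + t *\<^sub>R u))" and u: "u = a *\<^sub>R axis 1 1 + b *\<^sub>R axis 2 1"
  shows "((\<lambda>s. G (x + s *\<^sub>R u)) has_vector_derivative
    a *\<^sub>R pd 1 G (x + t *\<^sub>R u) + b *\<^sub>R pd 2 G (x + t *\<^sub>R u)) (at t)"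
proof -
  have G': "(G has_derivative frechet_derivative G (at (x + t *\<^sub>R u))) (at (x + t *\<^sub>R u))"
    using assms(1) frechet_derivative_works by blast
  from has_vector_derivative_along_line[OF this]
  show ?thesis
    using has_derivative_linear[OF G'] unfolding u pd_def by (simp add: linear_add linear_cmul)
qed

lemma horiz_norm_max_second_order:
  fixes F :: "real^2 \<Rightarrow> real^3"
  assumes V: "open V" "x0 \<in> V" and dF: "F differentiable_on V"
    and dP: "\<And>j. pd j F differentiable (at x0)"
    and max: "\<And>y. y \<in> V \<Longrightarrow> norm (horiz (F y)) \<le> norm (horiz (F x0))"
  shows "horiz (F x0) \<bullet> (a\<^sup>2 *\<^sub>R pd2 1 1 F x0 + (2 * a * b) *\<^sub>R pd2 1 2 F x0 + b\<^sup>2 *\<^sub>R pd2 2 2 F x0)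
    + (a\<^sup>2 * fff_E F x0 + 2 * a * b * fff_F F x0 + b\<^sup>2 * fff_G F x0)
    - (a * (pd 1 F x0 \<bullet> e3) + b * (pd 2 F x0 \<bullet> e3))\<^sup>2 \<le> 0"
proof -
  define u where "u = a *\<^sub>R axis 1 1 + b *\<^sub>R (axis 2 1 :: real^2)"
  define \<gamma>' where "\<gamma>' t = a *\<^sub>R pd 1 F (x0 + t *\<^sub>R u) + b *\<^sub>R pd 2 F (x0 + t *\<^sub>R u)" for t
  define \<gamma>'' where "\<gamma>'' = a *\<^sub>R (a *\<^sub>R pd2 1 1 F x0 + b *\<^sub>R pd2 2 1 F x0)
    + b *\<^sub>R (a *\<^sub>R pd2 1 2 F x0 + b *\<^sub>R pd2 2 2 F x0)"
  obtain \<rho> where \<rho>: "\<rho> > 0" and line_in_V: "\<And>t. \<bar>t\<bar> < \<rho> \<Longrightarrow> x0 + t *\<^sub>R u \<in> V"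
    using open_contains_line_segment[OF V, where u = u] by blast
  have \<gamma>: "((\<lambda>t. F (x0 + t *\<^sub>R u)) has_vector_derivative \<gamma>' t) (at t)" if "\<bar>t\<bar> < \<rho>" for t
    using dF V(1) line_in_V[OF that] u_def unfolding \<gamma>'_def
    by (intro has_vector_derivative_along_direction) (auto simp: differentiable_on_eq_differentiable_at)
  have "((\<lambda>t. pd j F (x0 + t *\<^sub>R u)) has_vector_derivative a *\<^sub>R pd2 1 j F x0 + b *\<^sub>R pd2 2 j F x0) (at 0)"
    for j
    using has_vector_derivative_along_direction[of "pd j F" x0 0 u a b] dP u_def
    unfolding pd2_def by simp
  then have \<gamma>': "(\<gamma>' has_vector_derivative \<gamma>'') (at 0)"
    unfolding \<gamma>'_def \<gamma>''_def
    by (intro has_vector_derivative_add bounded_linear.has_vector_derivative[OF bounded_linear_scaleR_right])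
  have "horiz (F (x0 + 0 *\<^sub>R u)) \<bullet> horiz \<gamma>'' + horiz (\<gamma>' 0) \<bullet> horiz (\<gamma>' 0) \<le> 0"
    using \<rho> bounded_linear.has_vector_derivative[OF bounded_linear_horiz \<gamma>]
      bounded_linear.has_vector_derivative[OF bounded_linear_horiz \<gamma>'] max line_in_V
    by (intro norm_local_max_second_order[of \<rho> "\<lambda>t. horiz (F (x0 + t *\<^sub>R u))"]) auto
  moreover have "horiz (F x0) \<bullet> horiz \<gamma>'' = horiz (F x0) \<bullet> \<gamma>''"
    using inner_horiz_horizontal[where c = "horiz (F x0)" and x = \<gamma>'']
    by (metis horiz_inner_e3 inner_commute)
  moreover have "(2 * a * b) *\<^sub>R w = (a * b) *\<^sub>R w + (a * b) *\<^sub>R w" for w :: "real^3"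
    by (metis mult.assoc mult_2 scaleR_add_left)
  then have "\<gamma>'' = a\<^sup>2 *\<^sub>R pd2 1 1 F x0 + (2 * a * b) *\<^sub>R pd2 1 2 F x0 + b\<^sup>2 *\<^sub>R pd2 2 2 F x0"
    unfolding \<gamma>''_def pd2_symmetric[OF V dF dP] by (simp add: algebra_simps power2_eq_square)
  moreover have "horiz (\<gamma>' 0) \<bullet> horiz (\<gamma>' 0) = \<gamma>' 0 \<bullet> \<gamma>' 0 - (\<gamma>' 0 \<bullet> e3)\<^sup>2"
    using norm_horiz_squared[of "\<gamma>' 0"] by (simp add: power2_norm_eq_inner)
  moreover have "\<gamma>' 0 \<bullet> \<gamma>' 0 = a\<^sup>2 * fff_E F x0 + 2 * a * b * fff_F F x0 + b\<^sup>2 * fff_G F x0"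
      "\<gamma>' 0 \<bullet> e3 = a * (pd 1 F x0 \<bullet> e3) + b * (pd 2 F x0 \<bullet> e3)"
    unfolding \<gamma>'_def fff_E_def fff_F_def fff_G_def
    by (simp_all add: inner_add_left inner_add_right inner_commute power2_eq_square algebra_simps)
  ultimately show ?thesis
    by simp
qed

section \<open>Minimal surfaces are unbounded\<close>

lemma gram_form_le_gram_det:
  fixes A B e :: "'a::real_inner"
  assumes "norm e = 1"
  shows "(B \<bullet> B) * (A \<bullet> e)\<^sup>2 - 2 * (A \<bullet> B) * (A \<bullet> e) * (B \<bullet> e) + (A \<bullet> A) * (B \<bullet> e)\<^sup>2
    \<le> (A \<bullet> A) * (B \<bullet> B) - (A \<bullet> B)\<^sup>2" (is "?P \<le> ?D")
proof -
  define Y where "Y = ((B \<bullet> B) * (A \<bullet> e) - (A \<bullet> B) * (B \<bullet> e)) *\<^sub>R A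
    + ((A \<bullet> A) * (B \<bullet> e) - (A \<bullet> B) * (A \<bullet> e)) *\<^sub>R B"
  have "Y \<bullet> e = ?P"
    unfolding Y_def by (simp add: inner_add_left power2_eq_square algebra_simps)
  moreover have "Y \<bullet> Y = ?D * ?P"
    unfolding Y_def
    by (simp add: inner_add_left inner_add_right inner_commute power2_eq_square algebra_simps)
  moreover have "(Y \<bullet> e)\<^sup>2 \<le> (Y \<bullet> Y) * (e \<bullet> e)"
    using Cauchy_Schwarz_ineq .
  ultimately have "?P\<^sup>2 \<le> ?D * ?P"
    using assms by (simp add: norm_eq_1)
  moreover have "0 \<le> ?D"
    using Cauchy_Schwarz_ineq[of A B] by simp
  ultimately show ?thesis
    by (cases "?P \<le> 0") (auto simp: power2_eq_square mult_le_cancel_right)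
qed

lemma metric_trace_nonpos:
  fixes E F G A11 A12 A22 :: real
  assumes form: "\<And>a b. a\<^sup>2 * A11 + 2 * a * b * A12 + b\<^sup>2 * A22 \<le> 0"
    and G: "0 \<le> G" and D: "0 < E * G - F\<^sup>2"
  shows "G * A11 - 2 * F * A12 + E * A22 \<le> 0"
proof -
  have "G \<noteq> 0"
    using D by auto
  have "G * (G * A11 - 2 * F * A12 + E * A22)
      = (G\<^sup>2 * A11 + 2 * G * (- F) * A12 + (- F)\<^sup>2 * A22) + (E * G - F\<^sup>2) * (0\<^sup>2 * A11 + 2 * 0 * 1 * A12 + 1\<^sup>2 * A22)"
    by (simp add: power2_eq_square algebra_simps)
  also have "\<dots> \<le> 0"
    using form[of G "- F"] form[of 0 1] D by (simp add: add_nonpos_nonpos mult_nonneg_nonpos)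
  finally show ?thesis
    using G \<open>G \<noteq> 0\<close> by (simp add: mult_le_0_iff)
qed

lemma horiz_normal_at_horiz_max:
  assumes surf: "immersed_surface X f N" and p: "p \<in> topspace X"
    and max: "\<And>q. q \<in> topspace X \<Longrightarrow> norm (horiz (f q)) \<le> norm (horiz (f p))"
  shows "horiz (f p) = (horiz (f p) \<bullet> N p) *\<^sub>R N p"
proof -
  have "2 *\<^sub>R horiz (f p) = ((2 *\<^sub>R horiz (f p)) \<bullet> N p) *\<^sub>R N p"
  proof (rule gradient_parallel_normal_at_max[OF surf p])
    show "((\<lambda>y. horiz y \<bullet> horiz y) has_derivative (\<lambda>h. (2 *\<^sub>R horiz (f p)) \<bullet> h)) (at (f p))"
      using horiz_dist_squared_has_derivative[of 0] by simp
    show "horiz (f q) \<bullet> horiz (f q) \<le> horiz (f p) \<bullet> horiz (f p)" if "q \<in> topspace X" for q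
      using max[OF that] by (simp flip: power2_norm_eq_inner add: power_mono)
  qed
  then show ?thesis
    by (metis inner_scaleR_left scaleR_cancel_left scaleR_scaleR zero_neq_numeral)
qed

lemma horiz_norm_no_max:
  assumes surf: "immersed_surface X f N" and minimal: "phi_minimal \<phi> X f N"
    and p: "p \<in> topspace X"
    and max: "\<And>q. q \<in> topspace X \<Longrightarrow> norm (horiz (f q)) \<le> norm (horiz (f p))"
  shows False
proof -
  obtain V \<psi> x0 where lp: "local_param X f V \<psi>" and x0: "x0 \<in> V" "\<psi> x0 = p"
    using surface_local_param_at[OF surf p] .
  note V = local_param_facts[OF lp]
  define F n where "F = f \<circ> \<psi>" and "n = N p"
  define lam where "lam = horiz (F x0) \<bullet> n"
  have Y: "horiz (F x0) = lam *\<^sub>R n"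
    using horiz_normal_at_horiz_max[OF surf p max] x0(2) unfolding lam_def n_def F_def by simp
  then have "lam * (n \<bullet> e3) = 0"
    using horiz_inner_e3[of "F x0"] by simp
  moreover have "mean_curv F n x0 = deriv \<phi> (f p \<bullet> e3) * (n \<bullet> e3)"
    using minimal[unfolded phi_minimal_def, rule_format, OF lp x0(1)] x0(2)
    unfolding F_def n_def by simp
  ultimately have lam_H: "lam * mean_curv F n x0 = 0"
    by (metis mult.left_commute mult_zero_right)
  define E Fc G z1 z2 where "E = fff_E F x0" and "Fc = fff_F F x0" and "G = fff_G F x0"
    and "z1 = pd 1 F x0 \<bullet> e3" and "z2 = pd 2 F x0 \<bullet> e3"
  define L11 L12 L22 where "L11 = pd2 1 1 F x0 \<bullet> n" and "L12 = pd2 1 2 F x0 \<bullet> n"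
    and "L22 = pd2 2 2 F x0 \<bullet> n"
  define D where "D = E * G - Fc\<^sup>2"
  have D: "D > 0"
    using V(3) x0(1) unfolding smooth_immersion_def D_def E_def Fc_def G_def F_def by blast
  have "a\<^sup>2 * (E - z1\<^sup>2 + lam * L11) + 2 * a * b * (Fc - z1 * z2 + lam * L12)
      + b\<^sup>2 * (G - z2\<^sup>2 + lam * L22) \<le> 0" for a b
  proof -
    have "norm (horiz (F y)) \<le> norm (horiz (F x0))" if "y \<in> V" for y
      using max[of "\<psi> y"] V(2) that x0(2) unfolding F_def by auto
    from horiz_norm_max_second_order[OF V(1) x0(1)
        local_param_differentiable[OF lp x0(1), folded F_def] this, of a b]
    show ?thesis
      unfolding Y E_def Fc_def G_def z1_def z2_def L11_def L12_def L22_def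
      by (simp add: inner_add_right inner_commute power2_eq_square algebra_simps)
  qed
  \<comment> \<open>Trace with respect to the first fundamental form: by minimality the mean curvature
    term vanishes, and the Gram bound below says that x3 has gradient of length at most 1.\<close>
  from metric_trace_nonpos[OF this _ D[unfolded D_def]]
  have "2 * D - (G * z1\<^sup>2 - 2 * Fc * z1 * z2 + E * z2\<^sup>2) + lam * (G * L11 - 2 * Fc * L12 + E * L22) \<le> 0"
    unfolding D_def G_def fff_G_def by (simp add: power2_eq_square algebra_simps)
  moreover have "lam * (G * L11 - 2 * Fc * L12 + E * L22) = 0"
    using lam_H D unfolding mean_curv_def D_def E_def Fc_def G_def L11_def L12_def L22_def
    by (simp add: field_simps)
  moreover have "G * z1\<^sup>2 - 2 * Fc * z1 * z2 + E * z2\<^sup>2 \<le> D"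
    using gram_form_le_gram_det[where e = e3 and A = "pd 1 F x0" and B = "pd 2 F x0"]
    unfolding D_def E_def Fc_def G_def z1_def z2_def fff_E_def fff_F_def fff_G_def by simp
  ultimately show False
    using D by linarith
qed

lemma minimal_surface_unbounded:
  assumes surf: "immersed_surface X f N" and proper: "proper_immersion X f"
    and minimal: "phi_minimal \<phi> X f N"
  shows "\<not> bounded (f ` topspace X)"
proof
  assume "bounded (f ` topspace X)"
  then obtain M where M: "\<And>p. p \<in> topspace X \<Longrightarrow> f p \<in> cball 0 M"
    unfolding bounded_iff by auto
  obtain p1 where p1: "p1 \<in> topspace X"
    using surf unfolding immersed_surface_def by blast
  have "continuous_on UNIV (\<lambda>x. norm (horiz x))"
    by (intro continuous_intros)
  moreover have "bounded {x \<in> cball 0 M. norm (horiz (f p1)) \<le> norm (horiz x)}"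
    by (rule bounded_subset[OF bounded_cball]) blast
  ultimately obtain p where "p \<in> topspace X"
    "\<And>q. q \<in> topspace X \<Longrightarrow> norm (horiz (f q)) \<le> norm (horiz (f p))"
    using proper_attains_max[OF surface_continuous[OF surf] proper p1 _ closed_cball M] by blast
  then show False
    using horiz_norm_no_max[OF surf minimal] by blast
qed

section \<open>Normals bounded away from the horizontal\<close>

lemma horizontal_unit_orthogonal:
  assumes v: "v \<noteq> 0" "v \<bullet> e3 = 0"
  obtains w where "norm w = 1" "w \<bullet> e3 = 0" "w \<bullet> v = 0"
proof
  define w where "w = (1 / norm v) *\<^sub>R cross3 e3 v"
  have "(norm (cross3 e3 v))\<^sup>2 = (norm v)\<^sup>2"
    using norm_cross[of e3 v] v(2) by (simp add: inner_commute)
  then have "norm (cross3 e3 v) = norm v"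
    by (simp add: power2_eq_iff_nonneg)
  then show "norm w = 1"
    using v(1) unfolding w_def by simp
  show "w \<bullet> e3 = 0" "w \<bullet> v = 0"
    unfolding w_def by (simp_all add: dot_cross_self)
qed

definition shadow :: "'a topology \<Rightarrow> ('a \<Rightarrow> real^3) \<Rightarrow> (real^3) set" where
  "shadow X f = horiz ` f ` topspace X"

lemma shadow_horizontal: "y \<in> shadow X f \<Longrightarrow> y \<bullet> e3 = 0"
  unfolding shadow_def by auto

locale steep_at_infinity =
  fixes X :: "'a topology" and f N :: "'a \<Rightarrow> real^3" and R \<epsilon> :: real
  assumes surf: "immersed_surface X f N" and proper: "proper_immersion X f"
    and eps_pos: "0 < \<epsilon>"
    and steep: "\<And>p. p \<in> topspace X \<Longrightarrow> R < norm (f p) \<Longrightarrow> \<epsilon> \<le> \<bar>N p \<bullet> e3\<bar>"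
begin

lemma penalized_max_gradient_bound:
  assumes p: "p \<in> topspace X" "R < norm (f p)"
    and W0: "(W0 has_derivative (\<lambda>h. g \<bullet> h)) (at (f p))" and g: "g \<bullet> e3 = 0" and \<delta>: "0 \<le> \<delta>"
    and max: "\<And>q. q \<in> topspace X \<Longrightarrow>
      W0 (f q) - \<delta> * sqrt (1 + (f q \<bullet> e3 - z)\<^sup>2) \<le> W0 (f p) - \<delta> * sqrt (1 + (f p \<bullet> e3 - z)\<^sup>2)"
  shows "\<epsilon> * norm g \<le> \<delta>"
proof -
  obtain s where s: "\<bar>s\<bar> \<le> 1"
    and penalty: "((\<lambda>x. sqrt (1 + (x \<bullet> e3 - z)\<^sup>2)) has_derivative (\<lambda>h. s * (h \<bullet> e3))) (at (f p))"
    using height_penalty_has_derivative by blast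
  define G where "G = g - (\<delta> * s) *\<^sub>R e3"
  have "((\<lambda>x. W0 x - \<delta> * sqrt (1 + (x \<bullet> e3 - z)\<^sup>2)) has_derivative (\<lambda>h. G \<bullet> h)) (at (f p))"
    using has_derivative_diff[OF W0 has_derivative_mult_right[OF penalty, of \<delta>]]
    by (simp add: G_def inner_diff_left inner_commute[of e3] mult.assoc)
  from gradient_parallel_normal_at_max[OF surf p(1) this max]
  have "\<epsilon> * norm (horiz G) \<le> \<bar>G \<bullet> e3\<bar>"
    by (rule horiz_bound_if_parallel_normal[OF _ unit_normal[OF surf p(1)] steep[OF p]])
  moreover have "horiz G = g" "G \<bullet> e3 = - (\<delta> * s)"
    using g by (simp_all add: G_def horiz_def inner_diff_left)
  moreover have "\<bar>\<delta> * s\<bar> \<le> \<delta>"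
    using s \<delta> by (simp add: abs_mult mult_left_le)
  ultimately show ?thesis by simp
qed

lemma cylinder_max_near_axis:
  assumes c: "c \<bullet> e3 = 0" and ps: "ps \<in> topspace X" "R < norm (f ps)" and \<delta>: "0 \<le> \<delta>"
    and max: "\<And>q. q \<in> topspace X \<Longrightarrow>
      - ((horiz (f q) - c) \<bullet> (horiz (f q) - c)) - \<delta> * sqrt (1 + (f q \<bullet> e3 - z)\<^sup>2)
      \<le> - ((horiz (f ps) - c) \<bullet> (horiz (f ps) - c)) - \<delta> * sqrt (1 + (f ps \<bullet> e3 - z)\<^sup>2)"
  shows "2 * \<epsilon> * dist (horiz (f ps)) c \<le> \<delta>"
proof -
  have "((\<lambda>x. - ((horiz x - c) \<bullet> (horiz x - c))) has_derivative
      (\<lambda>h. (- (2 *\<^sub>R (horiz (f ps) - c))) \<bullet> h)) (at (f ps))"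
    using has_derivative_minus[OF horiz_dist_squared_has_derivative[OF c]] by simp
  moreover have "(- (2 *\<^sub>R (horiz (f ps) - c))) \<bullet> e3 = 0"
    using c by (simp add: inner_diff_left)
  ultimately have "\<epsilon> * norm (- (2 *\<^sub>R (horiz (f ps) - c))) \<le> \<delta>"
    using max by (rule penalized_max_gradient_bound[OF ps _ _ \<delta>])
  then show ?thesis
    by (simp add: dist_norm)
qed

lemma shadow_avoids_ball:
  assumes c: "c \<bullet> e3 = 0" and gap: "c \<notin> closure (shadow X f)"
  shows "shadow X f \<inter> ball c (norm c - R) = {}"
proof (rule ccontr)
  obtain d where d: "d > 0" "\<And>y. y \<in> shadow X f \<Longrightarrow> d \<le> dist y c"
    using gap unfolding closure_approachable by (metis not_le)
  assume "shadow X f \<inter> ball c (norm c - R) \<noteq> {}"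
  then obtain p1 where p1: "p1 \<in> topspace X" "dist (horiz (f p1)) c < norm c - R"
    unfolding shadow_def by (auto simp: dist_commute)
  define \<delta> where "\<delta> = \<epsilon> * d"
  have \<delta>: "\<delta> > 0"
    unfolding \<delta>_def using eps_pos d(1) by simp
  define W0 where "W0 x = - ((horiz x - c) \<bullet> (horiz x - c))" for x
  define W where "W x = W0 x - \<delta> * sqrt (1 + (x \<bullet> e3 - f p1 \<bullet> e3)\<^sup>2)" for x
  have bounds: "norm (horiz x) \<le> norm c + sqrt (- W (f p1)) \<and> W0 x \<le> 0" if "W (f p1) \<le> W x" for x
  proof -
    have "0 \<le> \<delta> * sqrt (1 + (x \<bullet> e3 - f p1 \<bullet> e3)\<^sup>2)"
      using \<delta> by simp
    then have "(norm (horiz x - c))\<^sup>2 \<le> - W (f p1)"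
      using that unfolding W_def W0_def by (simp add: power2_norm_eq_inner)
    then have "norm (horiz x - c) \<le> sqrt (- W (f p1))"
      by (simp add: real_le_rsqrt)
    then show ?thesis
      using norm_triangle_ineq2[of "horiz x" c] unfolding W0_def by simp
  qed
  have "continuous_on UNIV W0"
    unfolding W0_def by (intro continuous_intros)
  then obtain ps where ps: "ps \<in> topspace X" and max: "\<And>q. q \<in> topspace X \<Longrightarrow> W (f q) \<le> W (f ps)"
    using proper_attains_penalized_max[OF surface_continuous[OF surf] proper p1(1) \<delta> _ closed_UNIV]
      bounds unfolding W_def by blast
  show False
  proof (cases "R < norm (f ps)")
    case True
    have "2 * \<epsilon> * dist (horiz (f ps)) c \<le> \<epsilon> * d"
      using cylinder_max_near_axis[OF c ps True less_imp_le[OF \<delta>]] max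
      unfolding W_def W0_def \<delta>_def by blast
    then have "2 * dist (horiz (f ps)) c \<le> d"
      using eps_pos by simp
    moreover have "d \<le> dist (horiz (f ps)) c"
      using d(2) ps unfolding shadow_def by blast
    ultimately show False
      using d(1) by linarith
  next
    case False
    then have "norm c - R \<le> norm (horiz (f ps) - c)"
      using norm_horiz_le[of "f ps"] norm_triangle_ineq2[of c "horiz (f ps)"]
      by (simp add: norm_minus_commute)
    moreover have "norm (horiz (f p1) - c) < norm c - R"
      using p1(2) by (simp add: dist_norm)
    ultimately have "(norm (horiz (f p1) - c))\<^sup>2 < (norm (horiz (f ps) - c))\<^sup>2"
      by (intro power_strict_mono) auto
    moreover have "W (f p1) = - (norm (horiz (f p1) - c))\<^sup>2 - \<delta>"
      unfolding W_def W0_def by (simp add: power2_norm_eq_inner)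
    moreover have "W (f ps) \<le> - (norm (horiz (f ps) - c))\<^sup>2 - \<delta>"
      using sqrt_one_plus_square_ge(1) \<delta> unfolding W_def W0_def
      by (simp add: power2_norm_eq_inner)
    ultimately show False
      using max[OF p1(1)] by linarith
  qed
qed

lemma connected_subset_closure_shadow:
  assumes S: "connected S" "S \<subseteq> {c. c \<bullet> e3 = 0 \<and> R + 1 < norm c}"
    and meets: "S \<inter> closure (shadow X f) \<noteq> {}"
  shows "S \<subseteq> closure (shadow X f)"
proof -
  have "c' \<in> closure (shadow X f)"
    if c: "c \<in> closure (shadow X f)" and c': "c' \<in> S" "dist c' c < 1 / 2" for c c'
  proof (rule ccontr)
    assume "c' \<notin> closure (shadow X f)"
    moreover have c'_hor: "c' \<bullet> e3 = 0" "R + 1 < norm c'"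
      using S(2) c'(1) by auto
    ultimately have avoid: "shadow X f \<inter> ball c' (norm c' - R) = {}"
      by (intro shadow_avoids_ball)
    obtain y where "y \<in> shadow X f" "dist c y < 1 / 2"
      using closure_approachableD[OF c] by (meson half_gt_zero zero_less_one)
    moreover have "dist c' y < norm c' - R"
      using c'(2) c'_hor(2) dist_triangle[of c' y c] \<open>dist c y < 1 / 2\<close> by (simp add: dist_commute)
    ultimately show False
      using avoid by (auto simp: dist_commute)
  qed
  then have "openin (top_of_set S) (S \<inter> closure (shadow X f))"
    unfolding openin_euclidean_subtopology_iff by (auto intro!: exI[of _ "1 / 2"])
  moreover have "closedin (top_of_set S) (S \<inter> closure (shadow X f))"
    by (simp add: closedin_closed_Int)
  ultimately show ?thesis
    using S(1) meets unfolding connected_clopen by blast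
qed

lemma closure_shadow_along_segment:
  assumes a: "a \<in> closure (shadow X f)" "a \<bullet> e3 = 0" and d: "d \<bullet> e3 = 0"
    and far: "\<And>t. 0 \<le> t \<Longrightarrow> t \<le> 1 \<Longrightarrow> R + 1 < norm (a + t *\<^sub>R d)"
  shows "a + d \<in> closure (shadow X f)"
proof -
  have "(1 - t) *\<^sub>R a + t *\<^sub>R (a + d) = a + t *\<^sub>R d" for t
    by (simp add: algebra_simps)
  then have "closed_segment a (a + d) \<subseteq> {c. c \<bullet> e3 = 0 \<and> R + 1 < norm c}"
    using a(2) d far by (auto simp: closed_segment_def inner_add_left)
  from connected_subset_closure_shadow[OF connected_segment this] a(1)
  show ?thesis by auto
qed

lemma closure_shadow_escape:
  assumes y0: "y0 \<in> closure (shadow X f)" "y0 \<bullet> e3 = 0" "R + 1 < norm y0"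
    and w: "norm w = 1" "w \<bullet> e3 = 0"
  obtains a where "a \<in> closure (shadow X f)" "a \<bullet> e3 = 0" "R + 1 < \<bar>a \<bullet> w\<bar>"
proof -
  define \<sigma> :: real where "\<sigma> = (if 0 \<le> y0 \<bullet> w then 1 else -1)"
  define d where "d = ((\<bar>R\<bar> + 2) * \<sigma>) *\<^sub>R w"
  have ww: "w \<bullet> w = 1"
    using w(1) by (simp add: norm_eq_1)
  have d: "d \<bullet> e3 = 0" "0 \<le> y0 \<bullet> d" "d \<bullet> w = (\<bar>R\<bar> + 2) * \<sigma>"
    using w(2) ww unfolding d_def \<sigma>_def by (auto simp: zero_le_mult_iff)
  have "y0 + d \<in> closure (shadow X f)"
  proof (rule closure_shadow_along_segment[OF y0(1,2) d(1)])
    fix t :: real assume t: "0 \<le> t" "t \<le> 1"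
    have "(norm y0)\<^sup>2 \<le> (norm y0)\<^sup>2 + 2 * t * (y0 \<bullet> d) + t\<^sup>2 * (d \<bullet> d)"
      using t d(2) by simp
    also have "\<dots> = (norm (y0 + t *\<^sub>R d))\<^sup>2"
      unfolding power2_norm_eq_inner
      by (simp add: inner_add_left inner_add_right inner_commute power2_eq_square algebra_simps)
    finally have "norm y0 \<le> norm (y0 + t *\<^sub>R d)"
      by (rule power2_le_imp_le[OF _ norm_ge_zero])
    then show "R + 1 < norm (y0 + t *\<^sub>R d)"
      using y0(3) by linarith
  qed
  moreover have "(y0 + d) \<bullet> e3 = 0"
    using y0(2) d(1) by (simp add: inner_add_left)
  moreover have "\<bar>(y0 + d) \<bullet> w\<bar> = \<bar>y0 \<bullet> w\<bar> + (\<bar>R\<bar> + 2)"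
    using d(3) unfolding \<sigma>_def by (auto simp: inner_add_left)
  ultimately show thesis
    using that by fastforce
qed

lemma closure_shadow_slide:
  assumes a: "a \<in> closure (shadow X f)" "a \<bullet> e3 = 0" "R + 1 < \<bar>a \<bullet> w\<bar>"
    and w: "norm w = 1" and d: "d \<bullet> e3 = 0" "d \<bullet> w = 0"
  shows "a + d \<in> closure (shadow X f)"
proof (rule closure_shadow_along_segment[OF a(1,2) d(1)])
  fix t :: real
  have "\<bar>(a + t *\<^sub>R d) \<bullet> w\<bar> \<le> norm (a + t *\<^sub>R d)"
    using Cauchy_Schwarz_ineq2[of "a + t *\<^sub>R d" w] w by simp
  then show "R + 1 < norm (a + t *\<^sub>R d)"
    using a(3) d(2) by (simp add: inner_add_left)
qed

lemma shadow_subset_cball_if_halfspace: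
  assumes v: "v \<noteq> 0" "v \<bullet> e3 = 0" and halfspace: "\<And>p. p \<in> topspace X \<Longrightarrow> f p \<bullet> v \<le> 0"
  shows "shadow X f \<subseteq> cball 0 (R + 1)"
proof
  fix y0 assume y0: "y0 \<in> shadow X f"
  show "y0 \<in> cball 0 (R + 1)"
  proof (rule ccontr)
    assume "y0 \<notin> cball 0 (R + 1)"
    \<comment> \<open>Move away from the origin along a horizontal w orthogonal to v, then along v into the
      open halfspace; both segments stay outside the disc of radius R + 1.\<close>
    moreover obtain w where w: "norm w = 1" "w \<bullet> e3 = 0" "w \<bullet> v = 0"
      using horizontal_unit_orthogonal[OF v] .
    ultimately obtain a where a: "a \<in> closure (shadow X f)" "a \<bullet> e3 = 0" "R + 1 < \<bar>a \<bullet> w\<bar>"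
      using closure_shadow_escape[OF _ shadow_horizontal[OF y0] _ w(1,2)] y0 closure_subset
      by (metis mem_cball_0 not_le subsetD)
    define c where "c = a + ((\<bar>a \<bullet> v\<bar> + 1) / (v \<bullet> v)) *\<^sub>R v"
    have "c \<in> closure (shadow X f)"
      unfolding c_def using w(3) v(2) by (intro closure_shadow_slide[OF a w(1)]) (simp_all add: inner_commute)
    moreover have "closure (shadow X f) \<subseteq> {y. y \<bullet> v \<le> 0}"
    proof (rule closure_minimal)
      show "shadow X f \<subseteq> {y. y \<bullet> v \<le> 0}"
        using halfspace inner_horiz_horizontal[OF v(2)] unfolding shadow_def by auto
      show "closed {y. y \<bullet> v \<le> 0}"
        by (intro closed_Collect_le continuous_intros)
    qed
    ultimately have "c \<bullet> v \<le> 0"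
      by blast
    moreover have "c \<bullet> v = a \<bullet> v + \<bar>a \<bullet> v\<bar> + 1"
      using v(1) unfolding c_def by (simp add: inner_add_left)
    ultimately show False
      using abs_ge_minus_self[of "a \<bullet> v"] by linarith
  qed
qed

lemma height_bounded_if_shadow_bounded:
  assumes K: "shadow X f \<subseteq> cball 0 K" and p1: "p1 \<in> topspace X"
  shows "\<bar>f p1 \<bullet> e3\<bar> \<le> R + 2 * (R + K) / \<epsilon> + 1"
proof -
  define u :: "real^3" where "u = axis 1 1"
  have u: "norm u = 1" "u \<bullet> e3 = 0"
    unfolding u_def e3_def by (simp_all add: inner_axis_axis)
  define \<delta> where "\<delta> = \<epsilon> / 2"
  have \<delta>: "\<delta> > 0"
    unfolding \<delta>_def using eps_pos by simp
  define W where "W x = x \<bullet> u - \<delta> * sqrt (1 + (x \<bullet> e3 - f p1 \<bullet> e3)\<^sup>2)" for x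
  have horiz_K: "norm (horiz (f p)) \<le> K" if "p \<in> topspace X" for p
    using K that unfolding shadow_def by (auto simp: subset_iff)
  have inner_u: "\<bar>x \<bullet> u\<bar> \<le> norm (horiz x)" for x
    using Cauchy_Schwarz_ineq2[of "horiz x" u] u inner_horiz_horizontal[OF u(2), of x] by simp
  have "closed {x. norm (horiz x) \<le> K}" "continuous_on UNIV (\<lambda>x. x \<bullet> u)"
    by (intro closed_Collect_le continuous_intros)+
  moreover have "norm (horiz x) \<le> K \<and> x \<bullet> u \<le> K" if "x \<in> {x. norm (horiz x) \<le> K}" for x
    using that inner_u[of x] abs_ge_self[of "x \<bullet> u"] by auto
  ultimately obtain ps where ps: "ps \<in> topspace X" and max: "\<And>q. q \<in> topspace X \<Longrightarrow> W (f q) \<le> W (f ps)"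
    using proper_attains_penalized_max[OF surface_continuous[OF surf] proper p1 \<delta>, of "\<lambda>x. x \<bullet> u"
        "{x. norm (horiz x) \<le> K}" "f p1 \<bullet> e3" K K] horiz_K
    unfolding W_def by blast
  have "\<not> R < norm (f ps)"
  proof
    assume "R < norm (f ps)"
    have "((\<lambda>x. x \<bullet> u) has_derivative (\<lambda>h. u \<bullet> h)) (at (f ps))"
      by (auto intro!: derivative_eq_intros simp: inner_commute)
    then have "\<epsilon> * norm u \<le> \<delta>"
      using max unfolding W_def
      by (rule penalized_max_gradient_bound[OF ps \<open>R < norm (f ps)\<close> _ u(2) less_imp_le[OF \<delta>]])
    then show False
      using u(1) eps_pos unfolding \<delta>_def by simp
  qed
  then have ps_R: "f ps \<bullet> u \<le> R" "\<bar>f ps \<bullet> e3\<bar> \<le> R"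
    using inner_u[of "f ps"] norm_horiz_le[of "f ps"] Cauchy_Schwarz_ineq2[of "f ps" e3] by auto
  have "W (f ps) \<le> R - \<delta> * \<bar>f ps \<bullet> e3 - f p1 \<bullet> e3\<bar>"
    using ps_R(1) sqrt_one_plus_square_ge(2) \<delta> unfolding W_def
    by (smt (verit) mult_left_mono)
  moreover have "- K - \<delta> \<le> W (f p1)"
    using inner_u[of "f p1"] horiz_K[OF p1] unfolding W_def by simp
  ultimately have "\<delta> * \<bar>f ps \<bullet> e3 - f p1 \<bullet> e3\<bar> \<le> (R + K) + \<delta> * 1"
    using max[OF p1] by linarith
  then have "\<bar>f ps \<bullet> e3 - f p1 \<bullet> e3\<bar> \<le> 2 * (R + K) / \<epsilon> + 1"
    using \<delta> unfolding \<delta>_def by (simp add: field_simps)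
  then show ?thesis
    using ps_R(2) by linarith
qed

lemma bounded_if_shadow_bounded:
  assumes K: "shadow X f \<subseteq> cball 0 K"
  shows "bounded (f ` topspace X)"
  unfolding bounded_iff
proof (intro exI ballI)
  fix x assume "x \<in> f ` topspace X"
  then obtain p where p: "p \<in> topspace X" "x = f p" by blast
  then have "norm (horiz x) \<le> K"
    using K unfolding shadow_def by (auto simp: subset_iff)
  then show "norm x \<le> K + (R + 2 * (R + K) / \<epsilon> + 1)"
    using norm_le_horiz_plus_height[of x] height_bounded_if_shadow_bounded[OF K p(1)]
    unfolding p(2) by linarith
qed

end

lemma small_eta_far_out:
  assumes surf: "immersed_surface X f N" and proper: "proper_immersion X f"
    and minimal: "phi_minimal \<phi> X f N"
    and v: "v \<noteq> 0" "v \<bullet> e3 = 0" and halfspace: "\<And>p. p \<in> topspace X \<Longrightarrow> f p \<bullet> v \<le> 0"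
    and \<epsilon>: "0 < \<epsilon>"
  shows "\<exists>p\<in>topspace X. R < norm (f p) \<and> \<bar>N p \<bullet> e3\<bar> < \<epsilon>"
proof (rule ccontr)
  assume "\<not> ?thesis"
  then interpret steep_at_infinity X f N R \<epsilon>
    using surf proper \<epsilon> by unfold_locales (auto simp: not_less)
  have "bounded (f ` topspace X)"
    by (rule bounded_if_shadow_bounded[OF shadow_subset_cball_if_halfspace[OF v halfspace]])
  then show False
    using minimal_surface_unbounded[OF surf proper minimal] by blast
qed

lemma divergent_seq_if_norm_exceeds_index:
  assumes f: "continuous_map X euclidean f" and P: "\<And>n. real n < norm (f (P n))"
  shows "divergent_seq X P"
  unfolding divergent_seq_def
proof (intro allI impI)
  fix K assume "compactin X K"
  then have "compact (f ` K)"
    using image_compactin[OF _ f] by (metis compactin_euclidean_iff)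
  then obtain B where B: "\<And>x. x \<in> f ` K \<Longrightarrow> norm x \<le> B"
    using compact_imp_bounded bounded_iff by metis
  have "P n \<notin> K" if "nat \<lceil>B\<rceil> \<le> n" for n
    using B[of "f (P n)"] P[of n] that by (auto dest!: real_nat_ceiling_ge[THEN order_trans])
  then show "\<forall>\<^sub>F n in sequentially. P n \<notin> K"
    unfolding eventually_sequentially by blast
qed

theorem corollary5p1:
  fixes \<phi> :: "real \<Rightarrow> real" and \<G> :: "real \<Rightarrow> real" and B :: real
    and X :: "'a topology" and f N :: "'a \<Rightarrow> real^3" and v :: "real^3"
  assumes phi_smooth: "smooth_on \<phi> UNIV"
    and G_smooth: "\<exists>S. open S \<and> {0..} \<subseteq> S \<and> smooth_on \<G> S"
    and G0: "\<G> 0 > 0"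
    and G_mono: "\<forall>t\<ge>0. deriv \<G> t \<ge> 0"
    and G_nonint: "\<not> set_integrable lborel {0..} (\<lambda>t. \<G> t powr (-1/2))"
    and G_limsup: "Limsup at_top (\<lambda>t. ereal (t * \<G> (sqrt t) / \<G> t)) < \<infinity>"
    and B_pos: "B > 0"
    and surf: "immersed_surface X f N"
    and proper: "proper_immersion X f"
    and minimal: "phi_minimal \<phi> X f N"
    and growth: "\<exists>K. compactin X K \<and>
        (\<forall>p\<in>topspace X - K. \<bar>deriv \<phi> (f p \<bullet> e3)\<bar> \<le> B * sqrt (\<G> (norm (f p))))"
    and v_nz: "v \<noteq> 0" and v_hor: "v \<bullet> e3 = 0"
    and halfspace: "\<forall>p\<in>topspace X. f p \<bullet> v \<le> 0"
  shows "(\<exists>c. f ` topspace X = {y. y \<bullet> v = c})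
    \<or> ((\<nexists>c. f ` topspace X = {y. y \<bullet> v = c}) \<and>
       (\<exists>p. (\<forall>n. p n \<in> topspace X) \<and> divergent_seq X p \<and>
            (\<lambda>n. N (p n) \<bullet> e3) \<longlonglongrightarrow> 0))"
proof -
  have "\<forall>n. \<exists>p\<in>topspace X. real n < norm (f p) \<and> \<bar>N p \<bullet> e3\<bar> < 1 / (real n + 1)"
    using small_eta_far_out[OF surf proper minimal v_nz v_hor] halfspace by simp
  then obtain P where P: "\<And>n. P n \<in> topspace X" "\<And>n. real n < norm (f (P n))"
    "\<And>n. \<bar>N (P n) \<bullet> e3\<bar> < 1 / (real n + 1)"
    by metis
  have "divergent_seq X P"
    by (rule divergent_seq_if_norm_exceeds_index[OF surface_continuous[OF surf] P(2)])
  moreover have "(\<lambda>n. N (P n) \<bullet> e3) \<longlonglongrightarrow> 0"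
  proof (rule Lim_null_comparison[OF _ LIMSEQ_inverse_real_of_nat])
    show "\<forall>\<^sub>F n in sequentially. norm (N (P n) \<bullet> e3) \<le> inverse (real (Suc n))"
      using P(3) by (auto intro!: always_eventually less_imp_le simp: inverse_eq_divide add.commute)
  qed
  ultimately show ?thesis
    using P(1) by blast
qed

end
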